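(* There is an absolute constant $C$ such that for every $f:\mathcal X\times\mathcal Y\to\{0,1\}$ and every $\delta\in(0,1/8)$, $\log\mathsf{prt}_\delta(f)\le C\log(1/\delta)\cdot\log\mathsf{prt}_{1/8}(f)$.
   Context: A rectangle is $A\times B$ with $A\subseteq\mathcal X,B\subseteq\mathcal Y$. The partition bound $\mathsf{prt}_\epsilon(f)$ is the optimal value of the LP: minimize $\sum_{z}\sum_R w_{z,R}$ over rectangles $R$ and outputs $z$, subject to $\sum_{R\ni(x,y)}w_{f(x,y),R}\ge1-\epsilon$ for all $(x,y)$; $\sum_{R\ni(x,y)}\sum_z w_{z,R}=1$ for all $(x,y)$; $w_{z,R}\ge0$. Logs base 2. *)

theory Defs
  imports Complex_Main
begin

(* Rectangles A \<times> B with A \<subseteq> X, B \<subseteq> Y, represented by the pair (A, B). *)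
definition rects :: "'a set \<Rightarrow> 'b set \<Rightarrow> ('a set \<times> 'b set) set" where
  "rects X Y = Pow X \<times> Pow Y"

(* Feasible solutions of the partition-bound LP; outputs z range over bool = {0,1}. *)
definition prt_feasible ::
  "'a set \<Rightarrow> 'b set \<Rightarrow> ('a \<Rightarrow> 'b \<Rightarrow> bool) \<Rightarrow> real
     \<Rightarrow> (bool \<Rightarrow> 'a set \<times> 'b set \<Rightarrow> real) \<Rightarrow> bool" where
  "prt_feasible X Y f eps w \<longleftrightarrow>
     (\<forall>z. \<forall>R\<in>rects X Y. w z R \<ge> 0) \<and>
     (\<forall>x\<in>X. \<forall>y\<in>Y.
        (\<Sum>R\<in>{R\<in>rects X Y. (x, y) \<in> fst R \<times> snd R}. w (f x y) R) \<ge> 1 - eps) \<and>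
     (\<forall>x\<in>X. \<forall>y\<in>Y.
        (\<Sum>R\<in>{R\<in>rects X Y. (x, y) \<in> fst R \<times> snd R}. \<Sum>z\<in>UNIV. w z R) = 1)"

definition prt :: "'a set \<Rightarrow> 'b set \<Rightarrow> ('a \<Rightarrow> 'b \<Rightarrow> bool) \<Rightarrow> real \<Rightarrow> real" where
  "prt X Y f eps =
     Inf {(\<Sum>z\<in>UNIV. \<Sum>R\<in>rects X Y. w z R) | w. prt_feasible X Y f eps w}"

end

theory Submission imports Defs begin

text \<open>Error reduction by majority vote. Given a feasible solution \<open>w\<close> with error \<open>1/8\<close>, take its
  \<open>2m\<close>-fold product: a tuple of labelled rectangles \<open>(z\<^sub>i, R\<^sub>i)\<close> carries weight \<open>\<Prod>\<^sub>i w z\<^sub>i R\<^sub>i\<close>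
  and is sent to the rectangle \<open>\<Inter>\<^sub>i R\<^sub>i\<close> with the majority label. At every input the labels
  behave like \<open>2m\<close> independent coin flips that are wrong with probability at most \<open>1/8\<close>, so the
  majority is wrong with probability at most \<open>(1/2)^m\<close>, while the objective becomes its \<open>2m\<close>-th
  power. Choosing \<open>m \<approx> log(1/\<delta>)\<close> gives the theorem with \<open>C = 3\<close>.\<close>

definition prt_objective :: "'a set \<Rightarrow> 'b set \<Rightarrow> (bool \<Rightarrow> 'a set \<times> 'b set \<Rightarrow> real) \<Rightarrow> real" where
  "prt_objective X Y w = (\<Sum>z\<in>UNIV. \<Sum>R\<in>rects X Y. w z R)"

definition rect_inter :: "'a set \<times> 'b set \<Rightarrow> 'a set \<times> 'b set \<Rightarrow> 'a set \<times> 'b set" where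
  "rect_inter R1 R2 = (fst R1 \<inter> fst R2, snd R1 \<inter> snd R2)"

lemma finite_rects: "finite X \<Longrightarrow> finite Y \<Longrightarrow> finite (rects X Y)"
  by (simp add: rects_def)

lemma full_rect_in_rects: "(X, Y) \<in> rects X Y"
  by (simp add: rects_def)

lemma rect_inter_in_rects: "R1 \<in> rects X Y \<Longrightarrow> R2 \<in> rects X Y \<Longrightarrow> rect_inter R1 R2 \<in> rects X Y"
  by (auto simp: rects_def rect_inter_def)

lemma mem_rect_inter:
  "p \<in> fst (rect_inter R1 R2) \<times> snd (rect_inter R1 R2) \<longleftrightarrow> p \<in> fst R1 \<times> snd R1 \<and> p \<in> fst R2 \<times> snd R2"
  by (cases p) (auto simp: rect_inter_def)

lemma prt_feasible_mono: "prt_feasible X Y f e w \<Longrightarrow> e \<le> e' \<Longrightarrow> prt_feasible X Y f e' w"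
  unfolding prt_feasible_def by force

lemma prt_objective_ge_one:
  assumes "finite X" "finite Y" "prt_feasible X Y f e w" "x \<in> X" "y \<in> Y"
  shows "1 \<le> prt_objective X Y w"
proof -
  have "1 = (\<Sum>R\<in>{R\<in>rects X Y. (x, y) \<in> fst R \<times> snd R}. \<Sum>z\<in>UNIV. w z R)"
    using assms by (simp add: prt_feasible_def)
  also have "\<dots> \<le> (\<Sum>R\<in>rects X Y. \<Sum>z\<in>UNIV. w z R)"
    using assms finite_rects[of X Y] by (intro sum_mono2) (auto simp: prt_feasible_def intro!: sum_nonneg)
  also have "\<dots> = prt_objective X Y w"
    unfolding prt_objective_def by (rule sum.swap)
  finally show ?thesis .
qed

lemma prt_feasible_exists:
  assumes "finite X" "finite Y" "0 \<le> e"
  shows "\<exists>w. prt_feasible X Y f e w"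
proof -
  define w where "w z R = (if \<exists>x\<in>X. \<exists>y\<in>Y. R = ({x}, {y}) \<and> z = f x y then 1 else 0 :: real)"
    for z R
  have point_mass: "(\<Sum>R\<in>{R\<in>rects X Y. (x, y) \<in> fst R \<times> snd R}. w z R) = (if z = f x y then 1 else 0)"
    if "x \<in> X" "y \<in> Y" for x y z
  proof -
    let ?T = "{R\<in>rects X Y. (x, y) \<in> fst R \<times> snd R}"
    have "finite ?T" "({x}, {y}) \<in> ?T"
      using that assms finite_rects[of X Y] by (auto simp: rects_def)
    moreover have "(\<Sum>R\<in>?T. w z R) = (\<Sum>R\<in>?T. if R = ({x}, {y}) then (if z = f x y then 1 else 0) else 0)"
      using that by (intro sum.cong) (auto simp: w_def)
    ultimately show ?thesis by simp
  qed
  have "prt_feasible X Y f 0 w"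
    unfolding prt_feasible_def
  proof (intro conjI ballI allI)
    fix x y assume "x \<in> X" "y \<in> Y"
    then show "1 - 0 \<le> (\<Sum>R\<in>{R\<in>rects X Y. (x, y) \<in> fst R \<times> snd R}. w (f x y) R)"
      and "(\<Sum>R\<in>{R\<in>rects X Y. (x, y) \<in> fst R \<times> snd R}. \<Sum>z\<in>UNIV. w z R) = 1"
      using point_mass[of x y] by (simp_all add: sum.swap[of _ _ UNIV] UNIV_bool sum.distrib)
  qed (simp add: w_def)
  then show ?thesis
    using prt_feasible_mono assms(3) by blast
qed

lemma prt_eq_Inf_objective: "prt X Y f e = Inf {prt_objective X Y w | w. prt_feasible X Y f e w}"
  by (simp add: prt_def prt_objective_def)

lemma prt_le_objective:
  assumes "finite X" "finite Y" "x \<in> X" "y \<in> Y" "prt_feasible X Y f e w"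
  shows "prt X Y f e \<le> prt_objective X Y w"
  unfolding prt_eq_Inf_objective
proof (rule cInf_lower)
  show "bdd_below {prt_objective X Y w | w. prt_feasible X Y f e w}"
    using prt_objective_ge_one[OF assms(1,2) _ assms(3,4)] by (intro bdd_belowI[of _ 1]) blast
qed (use assms(5) in blast)

lemma le_prt:
  assumes "finite X" "finite Y" "0 \<le> e" "\<And>w. prt_feasible X Y f e w \<Longrightarrow> r \<le> prt_objective X Y w"
  shows "r \<le> prt X Y f e"
  unfolding prt_eq_Inf_objective
  using prt_feasible_exists[OF assms(1-3)] assms(4) by (intro cInf_greatest) auto

lemma prt_ge_one:
  assumes "finite X" "finite Y" "x \<in> X" "y \<in> Y" "0 \<le> e"
  shows "1 \<le> prt X Y f e"
  using assms prt_objective_ge_one by (intro le_prt) auto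

text \<open>\<open>tensor_weight X Y w k c R\<close> is the total weight \<open>\<Prod>\<^sub>i w z\<^sub>i R\<^sub>i\<close> of all \<open>k\<close>-tuples of labelled
  rectangles \<open>(z\<^sub>i, R\<^sub>i)\<close> with \<open>R = (X, Y) \<inter> R\<^sub>1 \<inter> \<dots> \<inter> R\<^sub>k\<close> and exactly \<open>c\<close> labels \<open>True\<close>.\<close>

primrec tensor_weight ::
  "'a set \<Rightarrow> 'b set \<Rightarrow> (bool \<Rightarrow> 'a set \<times> 'b set \<Rightarrow> real) \<Rightarrow> nat \<Rightarrow> nat \<Rightarrow> 'a set \<times> 'b set \<Rightarrow> real"
where
  "tensor_weight X Y w 0 c R = (if c = 0 \<and> R = (X, Y) then 1 else 0)"
| "tensor_weight X Y w (Suc k) c R =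
     (\<Sum>P\<in>{P\<in>rects X Y \<times> rects X Y. rect_inter (fst P) (snd P) = R}.
        tensor_weight X Y w k c (fst P) * w False (snd P) +
        (if 0 < c then tensor_weight X Y w k (c - 1) (fst P) * w True (snd P) else 0))"

lemma tensor_weight_nonneg:
  assumes "\<forall>z. \<forall>R\<in>rects X Y. 0 \<le> w z R"
  shows "0 \<le> tensor_weight X Y w k c R"
proof (induction k arbitrary: c R)
  case (Suc k)
  then show ?case
    using assms by (auto intro!: sum_nonneg add_nonneg_nonneg mult_nonneg_nonneg)
qed simp

lemma sum_fibres_rect_inter:
  assumes "finite X" "finite Y"
    and Q: "\<And>R1 R2. R1 \<in> rects X Y \<Longrightarrow> R2 \<in> rects X Y \<Longrightarrow> Q (rect_inter R1 R2) \<longleftrightarrow> Q R1 \<and> Q R2"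
  shows "(\<Sum>R\<in>{R\<in>rects X Y. Q R}. \<Sum>P\<in>{P\<in>rects X Y \<times> rects X Y. rect_inter (fst P) (snd P) = R}. g (fst P) (snd P))
       = (\<Sum>R1\<in>{R\<in>rects X Y. Q R}. \<Sum>R2\<in>{R\<in>rects X Y. Q R}. g R1 R2)"
proof -
  let ?T = "{R\<in>rects X Y. Q R}"
  have fin: "finite ?T"
    using finite_rects[OF assms(1,2)] by simp
  have "(\<Sum>R\<in>?T. \<Sum>P\<in>{P\<in>rects X Y \<times> rects X Y. rect_inter (fst P) (snd P) = R}. g (fst P) (snd P))
      = (\<Sum>R\<in>?T. \<Sum>P\<in>{P\<in>?T \<times> ?T. rect_inter (fst P) (snd P) = R}. g (fst P) (snd P))"
    using Q by (intro sum.cong refl arg_cong2[where f = sum]) (auto, metis+)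
  also have "\<dots> = (\<Sum>P\<in>?T \<times> ?T. g (fst P) (snd P))"
    using fin Q rect_inter_in_rects by (intro sum.group) fastforce+
  also have "\<dots> = (\<Sum>R1\<in>?T. \<Sum>R2\<in>?T. g R1 R2)"
    by (simp add: sum.cartesian_product case_prod_beta')
  finally show ?thesis .
qed

lemma binomial_term_Suc:
  fixes a b :: "'a::comm_semiring_1"
  shows "of_nat (k choose c) * b ^ c * a ^ (k - c) * a
       + (if 0 < c then of_nat (k choose (c - 1)) * b ^ (c - 1) * a ^ (k - (c - 1)) * b else 0)
       = of_nat (Suc k choose c) * b ^ c * a ^ (Suc k - c)"
proof (cases c)
  case (Suc d)
  show ?thesis
  proof (cases "d < k")
    case True
    then obtain e where "k - d = Suc e" "k - Suc d = e" by (metis Suc_diff_Suc)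
    then show ?thesis using Suc by (simp add: algebra_simps)
  next
    case False
    then show ?thesis using Suc by (simp add: binomial_eq_0 algebra_simps)
  qed
qed (simp add: mult.commute)

text \<open>If membership in \<open>Q\<close> is decided factor by factor, as for the rectangles containing a fixed
  point, then on \<open>Q\<close> the labels of the \<open>k\<close> factors are independent, so the mass with \<open>c\<close> labels
  \<open>True\<close> is binomial.\<close>

lemma sum_tensor_weight:
  assumes fin: "finite X" "finite Y"
    and Q: "\<And>R1 R2. R1 \<in> rects X Y \<Longrightarrow> R2 \<in> rects X Y \<Longrightarrow> Q (rect_inter R1 R2) \<longleftrightarrow> Q R1 \<and> Q R2"
    and "Q (X, Y)"
  shows "(\<Sum>R\<in>{R\<in>rects X Y. Q R}. tensor_weight X Y w k c R)
       = real (k choose c) * (\<Sum>R\<in>{R\<in>rects X Y. Q R}. w True R) ^ c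
           * (\<Sum>R\<in>{R\<in>rects X Y. Q R}. w False R) ^ (k - c)"
proof (induction k arbitrary: c)
  case 0
  have "finite {R\<in>rects X Y. Q R}" "(X, Y) \<in> {R\<in>rects X Y. Q R}"
    using finite_rects[OF fin] \<open>Q (X, Y)\<close> full_rect_in_rects by auto
  then show ?case
    by (cases "c = 0") simp_all
next
  case (Suc k)
  let ?T = "{R\<in>rects X Y. Q R}"
  have "(\<Sum>R\<in>?T. tensor_weight X Y w (Suc k) c R)
      = (\<Sum>R1\<in>?T. \<Sum>R2\<in>?T. tensor_weight X Y w k c R1 * w False R2 +
           (if 0 < c then tensor_weight X Y w k (c - 1) R1 * w True R2 else 0))"
    using sum_fibres_rect_inter[where Q = Q and g = "\<lambda>R1 R2. tensor_weight X Y w k c R1 * w False R2 +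
          (if 0 < c then tensor_weight X Y w k (c - 1) R1 * w True R2 else 0)", OF fin Q] by simp
  also have "\<dots> = (\<Sum>R\<in>?T. tensor_weight X Y w k c R) * (\<Sum>R\<in>?T. w False R)
      + (if 0 < c then (\<Sum>R\<in>?T. tensor_weight X Y w k (c - 1) R) * (\<Sum>R\<in>?T. w True R) else 0)"
    by (simp add: sum.distrib sum_product)
  also have "\<dots> = real (Suc k choose c) * (\<Sum>R\<in>?T. w True R) ^ c * (\<Sum>R\<in>?T. w False R) ^ (Suc k - c)"
    unfolding Suc.IH by (rule binomial_term_Suc)
  finally show ?case .
qed

lemma power_mult_power_le:
  fixes p q r :: real
  assumes "0 \<le> p" "p \<le> r" "r \<le> 1" "0 \<le> q" "q \<le> 1" "m \<le> i"
  shows "p ^ i * q ^ j \<le> r ^ m"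
proof -
  have "p ^ i * q ^ j \<le> p ^ m * 1"
    using assms by (intro mult_mono power_decreasing power_le_one) auto
  also have "\<dots> \<le> r ^ m"
    using assms by (simp add: power_mono)
  finally show ?thesis .
qed

lemma sum_le_binomial_eighths:
  fixes g :: "nat \<Rightarrow> real"
  assumes "\<And>c. c \<le> 2 * m \<Longrightarrow> g c \<le> real (2 * m choose c) * (1/8) ^ m"
  shows "(\<Sum>c\<le>2 * m. g c) \<le> (1/2) ^ m"
proof -
  have "(\<Sum>c\<le>2 * m. g c) \<le> (\<Sum>c\<le>2 * m. real (2 * m choose c) * (1/8) ^ m)"
    using assms by (rule sum_mono) simp
  also have "\<dots> = 4 ^ m * (1/8) ^ m"
    by (simp add: sum_distrib_right[symmetric] power_mult choose_row_sum flip: of_nat_sum)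
  also have "\<dots> = (1/2) ^ m"
    by (simp flip: power_mult_distrib)
  finally show ?thesis .
qed

text \<open>\<open>b\<close> and \<open>a\<close> are the probabilities of the labels \<open>True\<close> and \<open>False\<close>, \<open>t\<close> is the correct
  label, and the sum is the probability that the majority of \<open>2m\<close> independent labels is wrong;
  a tie \<open>c = m\<close> is decided as \<open>False\<close>.\<close>

lemma binomial_majority_error:
  fixes a b :: real
  assumes "0 \<le> a" "0 \<le> b" "a + b = 1" "(if t then a else b) \<le> 1/8"
  shows "(\<Sum>c\<le>2 * m. if (m < c) = (\<not> t) then real (2 * m choose c) * b ^ c * a ^ (2 * m - c) else 0)
           \<le> (1/2) ^ m"
proof (rule sum_le_binomial_eighths)
  fix c assume "c \<le> 2 * m"
  have "b ^ c * a ^ (2 * m - c) \<le> (1/8) ^ m" if "(m < c) = (\<not> t)"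
  proof (cases t)
    case True
    then have "a ^ (2 * m - c) * b ^ c \<le> (1/8) ^ m"
      using assms that by (intro power_mult_power_le) auto
    then show ?thesis by (simp add: mult.commute)
  next
    case False
    then show ?thesis
      using assms that by (intro power_mult_power_le) auto
  qed
  then show "(if (m < c) = (\<not> t) then real (2 * m choose c) * b ^ c * a ^ (2 * m - c) else 0)
      \<le> real (2 * m choose c) * (1/8) ^ m"
    by (auto simp: mult.assoc intro: mult_left_mono)
qed

definition majority_vote ::
  "'a set \<Rightarrow> 'b set \<Rightarrow> (bool \<Rightarrow> 'a set \<times> 'b set \<Rightarrow> real) \<Rightarrow> nat \<Rightarrow> bool \<Rightarrow> 'a set \<times> 'b set \<Rightarrow> real"
where
  "majority_vote X Y w m z R = (\<Sum>c\<le>2 * m. if (m < c) = z then tensor_weight X Y w (2 * m) c R else 0)"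

lemma sum_majority_vote:
  assumes "finite X" "finite Y"
    and "\<And>R1 R2. R1 \<in> rects X Y \<Longrightarrow> R2 \<in> rects X Y \<Longrightarrow> Q (rect_inter R1 R2) \<longleftrightarrow> Q R1 \<and> Q R2"
    and "Q (X, Y)"
  shows "(\<Sum>R\<in>{R\<in>rects X Y. Q R}. majority_vote X Y w m z R)
       = (\<Sum>c\<le>2 * m. if (m < c) = z then real (2 * m choose c) * (\<Sum>R\<in>{R\<in>rects X Y. Q R}. w True R) ^ c
            * (\<Sum>R\<in>{R\<in>rects X Y. Q R}. w False R) ^ (2 * m - c) else 0)"
  unfolding majority_vote_def
  by (subst sum.swap) (intro sum.cong; simp add: sum_tensor_weight[OF assms])

lemma sum_majority_vote_labels:
  assumes "finite X" "finite Y"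
    and "\<And>R1 R2. R1 \<in> rects X Y \<Longrightarrow> R2 \<in> rects X Y \<Longrightarrow> Q (rect_inter R1 R2) \<longleftrightarrow> Q R1 \<and> Q R2"
    and "Q (X, Y)"
  shows "(\<Sum>z\<in>UNIV. \<Sum>R\<in>{R\<in>rects X Y. Q R}. majority_vote X Y w m z R)
       = ((\<Sum>R\<in>{R\<in>rects X Y. Q R}. w True R) + (\<Sum>R\<in>{R\<in>rects X Y. Q R}. w False R)) ^ (2 * m)"
proof -
  have "(\<Sum>z\<in>UNIV. \<Sum>R\<in>{R\<in>rects X Y. Q R}. majority_vote X Y w m z R)
      = (\<Sum>c\<le>2 * m. real (2 * m choose c) * (\<Sum>R\<in>{R\<in>rects X Y. Q R}. w True R) ^ c
            * (\<Sum>R\<in>{R\<in>rects X Y. Q R}. w False R) ^ (2 * m - c))"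
    by (simp add: UNIV_bool sum_majority_vote[OF assms] flip: sum.distrib, intro sum.cong) auto
  then show ?thesis
    by (simp only: binomial_ring)
qed

lemma prt_objective_majority_vote:
  assumes "finite X" "finite Y"
  shows "prt_objective X Y (majority_vote X Y w m) = prt_objective X Y w ^ (2 * m)"
  using sum_majority_vote_labels[OF assms, of "\<lambda>_. True"]
  by (simp add: prt_objective_def UNIV_bool add.commute)

lemma prt_feasible_majority_vote:
  assumes fin: "finite X" "finite Y" and feas: "prt_feasible X Y f (1/8) w"
  shows "prt_feasible X Y f ((1/2) ^ m) (majority_vote X Y w m)"
proof -
  have nonneg: "\<forall>z. \<forall>R\<in>rects X Y. 0 \<le> w z R"
    using feas by (simp add: prt_feasible_def)
  have at_point: "1 - (1/2) ^ m \<le> (\<Sum>R\<in>T. majority_vote X Y w m (f x y) R)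
      \<and> (\<Sum>R\<in>T. \<Sum>z\<in>UNIV. majority_vote X Y w m z R) = 1"
    if "x \<in> X" "y \<in> Y" and T: "T = {R\<in>rects X Y. (x, y) \<in> fst R \<times> snd R}" for x y T
  proof -
    define a where "a = (\<Sum>R\<in>T. w False R)"
    define b where "b = (\<Sum>R\<in>T. w True R)"
    let ?Q = "\<lambda>R. (x, y) \<in> fst R \<times> snd R"
    have "?Q (X, Y)"
      using that by simp
    note sums = sum_majority_vote_labels[where Q = ?Q and w = w and m = m, OF fin mem_rect_inter this]
      sum_majority_vote[where Q = ?Q and w = w and m = m, OF fin mem_rect_inter this]
    note sums = sums[folded T, folded a_def b_def]
    have nonneg_ab: "0 \<le> a" "0 \<le> b"
      using nonneg unfolding a_def b_def T by (auto intro!: sum_nonneg)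
    have "1 - 1/8 \<le> (\<Sum>R\<in>T. w (f x y) R)" "(\<Sum>R\<in>T. \<Sum>z\<in>UNIV. w z R) = 1"
      using feas that unfolding prt_feasible_def T by auto
    moreover from this have "a + b = 1" "1 - 1/8 \<le> (if f x y then b else a)"
      unfolding a_def b_def by (cases "f x y"; simp add: UNIV_bool sum.distrib)+
    ultimately have wrong: "(\<Sum>R\<in>T. majority_vote X Y w m (\<not> f x y) R) \<le> (1/2) ^ m"
      unfolding sums(2) using nonneg_ab by (intro binomial_majority_error) auto
    have total: "(\<Sum>z\<in>UNIV. \<Sum>R\<in>T. majority_vote X Y w m z R) = 1"
      unfolding sums(1) using \<open>a + b = 1\<close> by (simp add: add.commute)
    then have "(\<Sum>R\<in>T. majority_vote X Y w m (f x y) R) + (\<Sum>R\<in>T. majority_vote X Y w m (\<not> f x y) R) = 1"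
      by (cases "f x y") (simp_all add: UNIV_bool add.commute)
    with wrong total show ?thesis
      by (simp add: sum.swap[of _ T])
  qed
  show ?thesis
    unfolding prt_feasible_def
    using at_point[OF _ _ refl] tensor_weight_nonneg[OF nonneg]
    by (auto simp: majority_vote_def intro!: sum_nonneg)
qed

lemma prt_le_prt_eighth_power:
  assumes fin: "finite X" "finite Y" and xy: "x \<in> X" "y \<in> Y" and "0 < m" "(1/2) ^ m \<le> \<delta>"
  shows "prt X Y f \<delta> \<le> prt X Y f (1/8) ^ (2 * m)"
proof -
  have "0 \<le> \<delta>"
    using assms(6) zero_le_power[of "1/2 :: real" m] by linarith
  then have prt_nonneg: "0 \<le> prt X Y f \<delta>"
    using prt_ge_one[OF fin xy, of \<delta> f] by linarith
  have "root (2 * m) (prt X Y f \<delta>) \<le> prt X Y f (1/8)"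
  proof (rule le_prt[OF fin])
    fix w assume w: "prt_feasible X Y f (1/8) w"
    have "prt X Y f \<delta> \<le> prt_objective X Y (majority_vote X Y w m)"
      using prt_feasible_mono[OF prt_feasible_majority_vote[OF fin w] assms(6)]
      by (rule prt_le_objective[OF fin xy])
    then have "root (2 * m) (prt X Y f \<delta>) \<le> root (2 * m) (prt_objective X Y w ^ (2 * m))"
      using \<open>0 < m\<close> by (simp add: prt_objective_majority_vote[OF fin])
    also have "\<dots> = prt_objective X Y w"
      using \<open>0 < m\<close> prt_objective_ge_one[OF fin w xy] by (simp add: real_root_power_cancel)
    finally show "root (2 * m) (prt X Y f \<delta>) \<le> prt_objective X Y w" .
  qed simp
  then have "root (2 * m) (prt X Y f \<delta>) ^ (2 * m) \<le> prt X Y f (1/8) ^ (2 * m)"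
    using prt_nonneg by (intro power_mono) (simp_all add: real_root_ge_zero)
  then show ?thesis
    using \<open>0 < m\<close> prt_nonneg by simp
qed

lemma exists_half_power_le:
  fixes \<delta> :: real
  assumes "0 < \<delta>" "\<delta> < 1/8"
  shows "\<exists>m>0. (1/2) ^ m \<le> \<delta> \<and> 2 * real m \<le> 3 * log 2 (1/\<delta>)"
proof -
  define L where "L = log 2 (1/\<delta>)"
  have "log 2 8 < L"
    unfolding L_def using assms by (subst log_less_cancel_iff) (auto simp: field_simps)
  moreover have "log 2 (8::real) = 3"
    using log_pow_cancel[of "2::real" 3] by simp
  ultimately have "3 < L" by simp
  define m where "m = nat \<lceil>L\<rceil>"
  have "L \<le> real m" "real m < L + 1"
    using \<open>3 < L\<close> unfolding m_def by linarith+
  have "1/\<delta> \<le> 2 powr real m"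
    using \<open>L \<le> real m\<close> assms unfolding L_def by (subst (asm) log_le_iff) auto
  then have "1/\<delta> \<le> 2 ^ m"
    by (simp add: powr_realpow)
  then have "(1/2) ^ m \<le> \<delta>"
    using assms by (simp add: field_simps)
  moreover have "0 < m" "2 * real m \<le> 3 * L"
    using \<open>3 < L\<close> \<open>L \<le> real m\<close> \<open>real m < L + 1\<close> by linarith+
  ultimately show ?thesis
    unfolding L_def by blast
qed

theorem mainTheorem9:
  "\<exists>C::real. \<forall>(X::nat set) (Y::nat set) (f::nat \<Rightarrow> nat \<Rightarrow> bool) (\<delta>::real).
     finite X \<longrightarrow> finite Y \<longrightarrow> X \<noteq> {} \<longrightarrow> Y \<noteq> {} \<longrightarrow>
     0 < \<delta> \<longrightarrow> \<delta> < 1/8 \<longrightarrow>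
     log 2 (prt X Y f \<delta>) \<le> C * log 2 (1/\<delta>) * log 2 (prt X Y f (1/8))"
proof (intro exI[of _ 3] allI impI)
  fix X Y :: "nat set" and f :: "nat \<Rightarrow> nat \<Rightarrow> bool" and \<delta> :: real
  assume fin: "finite X" "finite Y" and "X \<noteq> {}" "Y \<noteq> {}" and \<delta>: "0 < \<delta>" "\<delta> < 1/8"
  then obtain x y where xy: "x \<in> X" "y \<in> Y"
    by blast
  obtain m where m: "0 < m" "(1/2) ^ m \<le> \<delta>" "2 * real m \<le> 3 * log 2 (1/\<delta>)"
    using exists_half_power_le[OF \<delta>] by blast
  let ?P = "prt X Y f (1/8)"
  have "1 \<le> ?P" "1 \<le> prt X Y f \<delta>"
    using prt_ge_one[OF fin xy] \<delta> by auto
  then have "log 2 (prt X Y f \<delta>) \<le> log 2 (?P ^ (2 * m))"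
    using prt_le_prt_eighth_power[OF fin xy m(1,2)] by simp
  also have "\<dots> = 2 * real m * log 2 ?P"
    using \<open>1 \<le> ?P\<close> by (simp add: log_nat_power)
  also have "\<dots> \<le> 3 * log 2 (1/\<delta>) * log 2 ?P"
    using m(3) \<open>1 \<le> ?P\<close> by (intro mult_right_mono) auto
  finally show "log 2 (prt X Y f \<delta>) \<le> 3 * log 2 (1/\<delta>) * log 2 ?P" .
qed

end
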